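(* Let $n\ge1$, $p$ a prime and $R\subsetneq E_n$. The $n$ vectors $\lambda^{(i)}_k$ ($1\le i\le h$, $1\le k\le g_i$) form a basis of $\mathbb{Q}^n$.
   Context: $E_n=\{1,\dots,n\}$, indices modulo $n$; $e_m$ ($m\in\mathbb{Z}$) the standard basis vectors of $\mathbb{Z}^n$ extended $n$-periodically. Write $E_n\setminus R=\{r_1,\dots,r_h\}$ ($h\ge1$) so that $r_{i+1}$ is the first element of $E_n\setminus R$ in the cyclic sequence $r_i+1,r_i+2,\dots$ (with $r_{h+1}=r_1$, $r_0=r_h$); let $g_i$ be the smallest positive integer with $r_{i-1}+g_i\equiv r_i\pmod n$. Define $\lambda^{(i)}_k=e_{r_i}+p^ke_{r_i-k}$ for $1\le k\le g_i-1$ and $\lambda^{(i)}_{g_i}=e_{r_i}-p^{g_i}e_{r_{i-1}}$. *)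

theory Defs
  imports Complex_Main "HOL-Computational_Algebra.Primes"
begin

text \<open>Vectors of Q^n are functions int => rat supported on E_n = {1..n}.
  Indices are taken modulo n, represented in {1..n}.\<close>

definition emod :: "nat \<Rightarrow> int \<Rightarrow> int" where
  "emod n m = (m - 1) mod int n + 1"

definition evec :: "nat \<Rightarrow> int \<Rightarrow> (int \<Rightarrow> rat)" where
  "evec n m = (\<lambda>j. if j = emod n m then 1 else 0)"

text \<open>For r in E_n - R: the gap g = smallest positive integer such that
  the previous element r' of E_n - R (cyclically) satisfies r' + g = r mod n,
  i.e. the smallest g > 0 with r - g mod n in E_n - R.\<close>
definition gap :: "nat \<Rightarrow> int set \<Rightarrow> int \<Rightarrow> nat" where
  "gap n R r = (LEAST g::nat. 0 < g \<and> emod n (r - int g) \<notin> R)"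

definition lam :: "nat \<Rightarrow> nat \<Rightarrow> int set \<Rightarrow> int \<Rightarrow> nat \<Rightarrow> (int \<Rightarrow> rat)" where
  "lam n p R r k =
     (if k < gap n R r
      then (\<lambda>j. evec n r j + (of_nat p) ^ k * evec n (r - int k) j)
      else (\<lambda>j. evec n r j - (of_nat p) ^ (gap n R r) * evec n (r - int (gap n R r)) j))"

definition lam_index :: "nat \<Rightarrow> int set \<Rightarrow> (int \<times> nat) set" where
  "lam_index n R = {(r, k). r \<in> {1..int n} - R \<and> 1 \<le> k \<and> k \<le> gap n R r}"

definition is_basis_Qn :: "nat \<Rightarrow> 'a set \<Rightarrow> ('a \<Rightarrow> (int \<Rightarrow> rat)) \<Rightarrow> bool" where
  "is_basis_Qn n I v \<longleftrightarrow> finite I \<and>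
     (\<forall>i\<in>I. \<forall>j. j \<notin> {1..int n} \<longrightarrow> v i j = 0) \<and>
     (\<forall>x::int \<Rightarrow> rat. (\<forall>j. j \<notin> {1..int n} \<longrightarrow> x j = 0) \<longrightarrow>
        (\<exists>!c::'a \<Rightarrow> rat. (\<forall>i. i \<notin> I \<longrightarrow> c i = 0) \<and>
                          x = (\<lambda>j. \<Sum>i\<in>I. c i * v i j)))"

end

theory Submission
  imports Defs "HOL-Library.Function_Algebras"
begin

text \<open>The map (r, k) \<mapsto> r - k (mod n) is a bijection from the index set onto E_n, so there
  are n vectors, each of the form e_r + w e_(r-k) with w \<noteq> 0. In a vanishing combination,
  a coordinate s \<in> R is hit only by the second summand of a single vector; this kills the
  coefficients of all \<lambda>(i, k) with k < g_i. The coordinate r_(i-1) then gives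
  c_(i-1) = p^(g_i) c_i for the coefficient c_i of \<lambda>(i, g_i), so a coefficient of maximal
  absolute value must vanish. Finally, n independent vectors in Q^n span it.\<close>

interpretation pointwise: vector_space "\<lambda>(c::'a::field) (f::'b \<Rightarrow> 'a) j. c * f j"
  by unfold_locales (auto simp: algebra_simps fun_eq_iff)

lemma sum_apply: "(\<Sum>a\<in>A. f a) j = (\<Sum>a\<in>A. f a j)"
  by (induction A rule: infinite_finite_induct) auto

lemma pointwise_sum_image:
  fixes v :: "'i \<Rightarrow> 'j \<Rightarrow> 'a::field"
  assumes "inj_on v I"
  shows "(\<Sum>y\<in>v ` I. (\<lambda>j. u y * y j)) = (\<lambda>j. \<Sum>i\<in>I. u (v i) * v i j)"
  using assms by (simp add: sum.reindex sum_apply fun_eq_iff)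

lemma inj_on_if_coefficients_zero:
  fixes v :: "'i \<Rightarrow> 'j \<Rightarrow> 'a::field"
  assumes "finite I"
    and indep: "\<And>c. (\<And>j. (\<Sum>i\<in>I. c i * v i j) = 0) \<Longrightarrow> \<forall>i\<in>I. c i = 0"
  shows "inj_on v I"
proof (rule inj_onI, rule ccontr)
  fix a b assume ab: "a \<in> I" "b \<in> I" "v a = v b" "a \<noteq> b"
  define c :: "'i \<Rightarrow> 'a" where "c i = (if i = a then 1 else if i = b then -1 else 0)" for i
  have "(\<Sum>i\<in>I. c i * v i j) = 0" for j
  proof -
    have "(\<Sum>i\<in>I. c i * v i j)
        = (\<Sum>i\<in>I. (if i = a then v a j else 0) - (if i = b then v b j else 0))"
      using ab(4) by (intro sum.cong) (auto simp: c_def)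
    also have "\<dots> = 0" using ab \<open>finite I\<close> by (simp add: sum_subtractf)
    finally show ?thesis .
  qed
  then have "\<forall>i\<in>I. c i = 0" by (rule indep)
  then have "c a = 0" using \<open>a \<in> I\<close> by blast
  then show False by (simp add: c_def)
qed

lemma pointwise_independent_if_coefficients_zero:
  fixes v :: "'i \<Rightarrow> 'j \<Rightarrow> 'a::field"
  assumes "finite I"
    and indep: "\<And>c. (\<And>j. (\<Sum>i\<in>I. c i * v i j) = 0) \<Longrightarrow> \<forall>i\<in>I. c i = 0"
  shows "pointwise.independent (v ` I)"
proof (rule pointwise.independent_if_scalars_zero)
  have inj: "inj_on v I" using inj_on_if_coefficients_zero assms .
  fix u y assume sum_zero: "(\<Sum>y\<in>v ` I. (\<lambda>j. u y * y j)) = 0" and "y \<in> v ` I"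
  have "(\<Sum>i\<in>I. u (v i) * v i j) = 0" for j
    using fun_cong[OF sum_zero, of j] unfolding pointwise_sum_image[OF inj] by simp
  then have "\<forall>i\<in>I. u (v i) = 0" using indep[of "\<lambda>i. u (v i)"] by blast
  then show "u y = 0" using \<open>y \<in> v ` I\<close> by blast
qed (use assms in simp)

lemma supported_in_span_indicators:
  fixes x :: "'j \<Rightarrow> 'a::field"
  assumes "finite S" and "\<And>j. j \<notin> S \<Longrightarrow> x j = 0"
  shows "x \<in> pointwise.span ((\<lambda>s j. if j = s then 1 else 0) ` S)"
proof -
  have "(\<Sum>s\<in>S. x s * (if j = s then 1 else 0)) = x j" for j
  proof -
    have "(\<Sum>s\<in>S. x s * (if j = s then 1 else 0)) = (\<Sum>s\<in>S. if j = s then x s else 0)"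
      by (rule sum.cong) auto
    then show ?thesis using assms by (simp add: sum.delta)
  qed
  then have "x = (\<Sum>s\<in>S. (\<lambda>j. x s * (if j = s then 1 else 0)))"
    by (simp add: sum_apply fun_eq_iff)
  also have "\<dots> \<in> pointwise.span ((\<lambda>s j. if j = s then 1 else 0) ` S)"
    by (intro pointwise.span_sum pointwise.span_scale pointwise.span_base) auto
  finally show ?thesis .
qed

lemma unique_combination_if_independent:
  fixes v :: "'i \<Rightarrow> 'j \<Rightarrow> 'a::field"
  assumes "finite I" "finite S" "card I = card S"
    and support: "\<And>i j. i \<in> I \<Longrightarrow> j \<notin> S \<Longrightarrow> v i j = 0"
    and indep: "\<And>c. (\<And>j. (\<Sum>i\<in>I. c i * v i j) = 0) \<Longrightarrow> \<forall>i\<in>I. c i = 0"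
    and x: "\<And>j. j \<notin> S \<Longrightarrow> x j = 0"
  shows "\<exists>!c. (\<forall>i. i \<notin> I \<longrightarrow> c i = 0) \<and> x = (\<lambda>j. \<Sum>i\<in>I. c i * v i j)"
proof -
  have inj: "inj_on v I" using inj_on_if_coefficients_zero \<open>finite I\<close> indep .
  have "x \<in> pointwise.span (v ` I)"
  proof (rule ccontr)
    assume x_out: "x \<notin> pointwise.span (v ` I)"
    then have "x \<notin> v ` I" using pointwise.span_base by blast
    let ?D = "(\<lambda>s j. if j = s then 1 else 0 :: 'a) ` S"
    have "pointwise.independent (insert x (v ` I))"
      using x_out pointwise_independent_if_coefficients_zero[OF \<open>finite I\<close> indep]
      by (rule pointwise.independent_insertI)
    moreover have "insert x (v ` I) \<subseteq> pointwise.span ?D"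
      using supported_in_span_indicators[OF \<open>finite S\<close>] x support by auto
    ultimately have "card (insert x (v ` I)) \<le> card ?D"
      using pointwise.independent_span_bound \<open>finite S\<close> by blast
    also have "\<dots> \<le> card I"
      using card_image_le[OF \<open>finite S\<close>] \<open>card I = card S\<close> by simp
    also have "card I < card (insert x (v ` I))"
      using \<open>x \<notin> v ` I\<close> \<open>finite I\<close> by (simp add: card_image[OF inj])
    finally show False by simp
  qed
  then obtain u where "x = (\<Sum>y\<in>v ` I. (\<lambda>j. u y * y j))"
    unfolding pointwise.span_finite[OF finite_imageI[OF \<open>finite I\<close>]] by blast
  then have "x = (\<lambda>j. \<Sum>i\<in>I. (if i \<in> I then u (v i) else 0) * v i j)"
    by (simp add: pointwise_sum_image[OF inj])
  moreover have "c = d"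
    if c: "\<forall>i. i \<notin> I \<longrightarrow> c i = 0" and d: "\<forall>i. i \<notin> I \<longrightarrow> d i = 0"
      and eq: "(\<lambda>j. \<Sum>i\<in>I. c i * v i j) = (\<lambda>j. \<Sum>i\<in>I. d i * v i j)" for c d
  proof -
    have "(\<Sum>i\<in>I. (c i - d i) * v i j) = 0" for j
      using fun_cong[OF eq, of j] by (simp add: left_diff_distrib sum_subtractf)
    then have "\<forall>i\<in>I. c i - d i = 0" by (rule indep)
    then show "c = d" using c d by (metis eq_iff_diff_eq_0 ext)
  qed
  ultimately show ?thesis by (intro ex1I[of _ "\<lambda>i. if i \<in> I then u (v i) else 0"]) auto
qed

lemma Least_positive:
  fixes P :: "nat \<Rightarrow> bool"
  assumes "0 < m" "P m"
  shows "0 < (LEAST g. 0 < g \<and> P g)" "P (LEAST g. 0 < g \<and> P g)"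
    and "\<And>g. 0 < g \<Longrightarrow> g < (LEAST g. 0 < g \<and> P g) \<Longrightarrow> \<not> P g"
proof -
  show "0 < (LEAST g. 0 < g \<and> P g)" "P (LEAST g. 0 < g \<and> P g)"
    using LeastI[of "\<lambda>g. 0 < g \<and> P g" m] assms by auto
  show "\<not> P g" if "0 < g" "g < (LEAST g. 0 < g \<and> P g)" for g
    using not_less_Least[of g "\<lambda>g. 0 < g \<and> P g"] that by auto
qed

lemma emod_in_range:
  assumes "n \<ge> 1"
  shows "emod n m \<in> {1..int n}"
proof -
  have "(m - 1) mod int n < int n" "0 \<le> (m - 1) mod int n" using assms by simp_all
  then show ?thesis unfolding emod_def by simp
qed

lemma emod_eq_self: "m \<in> {1..int n} \<Longrightarrow> emod n m = m"
  unfolding emod_def by simp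

lemma emod_eq_iff: "emod n a = emod n b \<longleftrightarrow> a mod int n = b mod int n"
proof -
  have "(a - 1) mod int n = (b - 1) mod int n \<longleftrightarrow> a mod int n = b mod int n"
    by (metis add_diff_cancel_right' diff_add_cancel mod_add_left_eq mod_diff_left_eq)
  then show ?thesis unfolding emod_def by simp
qed

lemma emod_emod_add: "emod n (emod n a + b) = emod n (a + b)"
proof -
  have "((a - 1) mod int n + b) mod int n = ((a - 1) + b) mod int n"
    by (simp add: mod_add_left_eq)
  then show ?thesis unfolding emod_def by (simp add: algebra_simps)
qed

lemma emod_shift_exists:
  assumes "n \<ge> 1"
  shows "\<exists>g. 0 < g \<and> emod n (a + int g) = emod n b"
proof (intro exI conjI)
  let ?g = "nat (emod n (b - a))"
  have "int ?g = emod n (b - a)" using emod_in_range[OF assms, of "b - a"] by simp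
  then show "0 < ?g" "emod n (a + int ?g) = emod n b"
    using emod_in_range[OF assms, of "b - a"] emod_emod_add[of n "b - a" a]
    by (simp_all add: add.commute)
qed

locale cyclic_gaps =
  fixes n :: nat and R :: "int set"
  assumes free_index_exists: "{1..int n} - R \<noteq> {}"
begin

abbreviation lam_family :: "nat \<Rightarrow> int \<times> nat \<Rightarrow> int \<Rightarrow> rat" where
  "lam_family p \<equiv> \<lambda>(r, k). lam n p R r k"

lemma n_pos: "n \<ge> 1"
  using free_index_exists by auto

lemma gap_exists: "\<exists>g. 0 < g \<and> emod n (r - int g) \<notin> R"
proof -
  obtain s where s: "s \<in> {1..int n}" "s \<notin> R" using free_index_exists by blast
  obtain g where "0 < g" "emod n (s + int g) = emod n r"
    using emod_shift_exists[OF n_pos] by blast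
  then have "emod n (r - int g) = s"
    using emod_eq_self[OF s(1)] by (metis emod_eq_iff mod_diff_cong add_diff_cancel_right')
  then show ?thesis using \<open>0 < g\<close> s(2) by auto
qed

lemma ahead_exists: "\<exists>t. 0 < t \<and> emod n (s + int t) \<notin> R"
proof -
  obtain s' where s': "s' \<in> {1..int n}" "s' \<notin> R" using free_index_exists by blast
  then show ?thesis using emod_shift_exists[OF n_pos, of s s'] emod_eq_self[OF s'(1)] by metis
qed

lemma gap_pos: "0 < gap n R r"
  and gap_free: "emod n (r - int (gap n R r)) \<notin> R"
  and gap_minimal: "0 < g \<Longrightarrow> g < gap n R r \<Longrightarrow> emod n (r - int g) \<in> R"
  using gap_exists[of r] Least_positive[of _ "\<lambda>g. emod n (r - int g) \<notin> R"]
  unfolding gap_def by blast+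

definition ahead :: "int \<Rightarrow> nat" where
  "ahead s = (LEAST t. 0 < t \<and> emod n (s + int t) \<notin> R)"

lemma ahead_pos: "0 < ahead s"
  and ahead_free: "emod n (s + int (ahead s)) \<notin> R"
  and ahead_minimal: "0 < t \<Longrightarrow> t < ahead s \<Longrightarrow> emod n (s + int t) \<in> R"
  using ahead_exists[of s] Least_positive[of _ "\<lambda>t. emod n (s + int t) \<notin> R"]
  unfolding ahead_def by blast+

text \<open>back_index (r_i, k) = r_i - k is the position of the second summand of \<lambda>(i, k);
  front inverts it by searching forward from a position for the next element of E_n - R.\<close>

definition back_index :: "int \<times> nat \<Rightarrow> int" where
  "back_index = (\<lambda>(r, k). emod n (r - int k))"

definition front :: "int \<Rightarrow> int \<times> nat" where
  "front s = (emod n (s + int (ahead s)), ahead s)"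

lemma front_back_index:
  assumes "(r, k) \<in> lam_index n R"
  shows "front (back_index (r, k)) = (r, k)"
proof -
  have r: "r \<in> {1..int n}" "r \<notin> R" and k: "0 < k" "k \<le> gap n R r"
    using assms unfolding lam_index_def by auto
  have shift: "emod n (back_index (r, k) + int t) = emod n (r - int (k - t))" if "t \<le> k" for t
    using that emod_emod_add[of n "r - int k" "int t"] unfolding back_index_def
    by (simp add: of_nat_diff algebra_simps)
  have "ahead (back_index (r, k)) = k"
    unfolding ahead_def
  proof (rule Least_equality)
    show "0 < k \<and> emod n (back_index (r, k) + int k) \<notin> R"
      using shift[of k] k(1) r emod_eq_self by simp
    show "k \<le> t" if t: "0 < t \<and> emod n (back_index (r, k) + int t) \<notin> R" for t
    proof (rule ccontr)
      assume "\<not> k \<le> t"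
      then have "0 < k - t" "k - t < gap n R r" using t k by auto
      then have "emod n (r - int (k - t)) \<in> R" by (rule gap_minimal)
      then show False using t shift[of t] \<open>\<not> k \<le> t\<close> by simp
    qed
  qed
  then show ?thesis
    using shift[of k] emod_eq_self[OF r(1)] unfolding front_def by simp
qed

lemma front_in_lam_index:
  assumes "s \<in> {1..int n}"
  shows "front s \<in> lam_index n R" and "back_index (front s) = s"
proof -
  define t r where "t = ahead s" and "r = emod n (s + int t)"
  have r: "r \<in> {1..int n}" "r \<notin> R"
    using emod_in_range[OF n_pos] ahead_free unfolding r_def t_def by auto
  have "t \<le> gap n R r"
  proof (rule ccontr)
    assume "\<not> t \<le> gap n R r"
    then have "emod n (s + int (t - gap n R r)) \<in> R"
      using ahead_minimal[of "t - gap n R r" s] gap_pos[of r] unfolding t_def by simp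
    moreover have "emod n (s + int (t - gap n R r)) = emod n (r - int (gap n R r))"
      using \<open>\<not> t \<le> gap n R r\<close> emod_emod_add[of n "s + int t" "- int (gap n R r)"]
      unfolding r_def by (simp add: of_nat_diff algebra_simps)
    ultimately show False using gap_free by simp
  qed
  then show "front s \<in> lam_index n R"
    using r ahead_pos[of s] unfolding front_def lam_index_def r_def t_def by auto
  show "back_index (front s) = s"
    using emod_emod_add[of n "s + int t" "- int t"] emod_eq_self[OF assms]
    unfolding back_index_def front_def t_def by simp
qed

lemma bij_betw_back_index: "bij_betw back_index (lam_index n R) {1..int n}"
proof (rule bij_betw_byWitness[where f' = front])
  show "back_index ` lam_index n R \<subseteq> {1..int n}"
    using emod_in_range[OF n_pos] unfolding back_index_def by auto
qed (use front_back_index front_in_lam_index in auto)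

lemma finite_lam_index: "finite (lam_index n R)"
  using bij_betw_finite[OF bij_betw_back_index] by simp

lemma card_lam_index: "card (lam_index n R) = n"
  using bij_betw_same_card[OF bij_betw_back_index] by simp

lemma back_index_in_R_iff:
  assumes "(r, k) \<in> lam_index n R"
  shows "back_index (r, k) \<in> R \<longleftrightarrow> k < gap n R r"
proof (cases "k < gap n R r")
  case False
  then have "k = gap n R r" using assms unfolding lam_index_def by simp
  then show ?thesis using gap_free[of r] False unfolding back_index_def by simp
qed (use assms gap_minimal[of k r] in \<open>auto simp: lam_index_def back_index_def\<close>)

lemma gap_index_in_lam_index:
  "s \<in> {1..int n} \<Longrightarrow> s \<notin> R \<Longrightarrow> (s, gap n R s) \<in> lam_index n R"
  using gap_pos[of s] unfolding lam_index_def by auto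

definition lam_weight :: "nat \<Rightarrow> int \<times> nat \<Rightarrow> rat" where
  "lam_weight p = (\<lambda>(r, k). if k < gap n R r then of_nat p ^ k else - (of_nat p ^ gap n R r))"

lemma lam_family_eq:
  assumes "a \<in> lam_index n R"
  shows "lam_family p a j
    = (if j = fst a then 1 else 0) + lam_weight p a * (if j = back_index a then 1 else 0)"
  using assms emod_eq_self
  unfolding lam_index_def lam_def evec_def lam_weight_def back_index_def by auto

lemma lam_family_support: "j \<notin> {1..int n} \<Longrightarrow> lam_family p a j = 0"
  using emod_in_range[OF n_pos] unfolding lam_def evec_def by (auto split: prod.splits)

lemma lam_combination_at_back_index:
  assumes "a \<in> lam_index n R"
  shows "(\<Sum>b\<in>lam_index n R. c b * lam_family p b (back_index a))
    = (\<Sum>b\<in>lam_index n R. if fst b = back_index a then c b else 0) + c a * lam_weight p a"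
proof -
  let ?I = "lam_index n R"
  have "(\<Sum>b\<in>?I. c b * lam_family p b (back_index a))
      = (\<Sum>b\<in>?I. (if fst b = back_index a then c b else 0) + (if b = a then c b * lam_weight p b else 0))"
  proof (rule sum.cong)
    fix b assume "b \<in> ?I"
    then have "back_index b = back_index a \<longleftrightarrow> b = a"
      using assms bij_betw_back_index by (auto simp: bij_betw_def inj_on_def)
    then show "c b * lam_family p b (back_index a)
      = (if fst b = back_index a then c b else 0) + (if b = a then c b * lam_weight p b else 0)"
      using lam_family_eq[OF \<open>b \<in> ?I\<close>] by (auto simp: algebra_simps)
  qed simp
  then show ?thesis using assms finite_lam_index by (simp add: sum.distrib)
qed

lemma lam_weight_nonzero: "p \<noteq> 0 \<Longrightarrow> lam_weight p a \<noteq> 0"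
  unfolding lam_weight_def by (auto split: prod.splits)

context
  fixes p :: nat and c :: "int \<times> nat \<Rightarrow> rat"
  assumes p_ge_2: "p \<ge> 2"
    and zero_combination: "\<And>j. (\<Sum>a\<in>lam_index n R. c a * lam_family p a j) = 0"
begin

lemma coeff_below_gap_zero:
  assumes rk: "(r, k) \<in> lam_index n R" "k < gap n R r"
  shows "c (r, k) = 0"
proof -
  have "(\<Sum>b\<in>lam_index n R. if fst b = back_index (r, k) then c b else 0) = 0"
    using back_index_in_R_iff[OF rk(1)] rk(2) by (intro sum.neutral) (auto simp: lam_index_def)
  then have "c (r, k) * lam_weight p (r, k) = 0"
    using zero_combination[of "back_index (r, k)"] lam_combination_at_back_index[OF rk(1)] by simp
  then show ?thesis using lam_weight_nonzero p_ge_2 by simp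
qed

lemma coeff_at_gap_step:
  assumes r: "(r, gap n R r) \<in> lam_index n R" and s_def: "s = back_index (r, gap n R r)"
  shows "c (s, gap n R s) = of_nat p ^ gap n R r * c (r, gap n R r)"
proof -
  let ?I = "lam_index n R"
  have s: "s \<in> {1..int n}" "s \<notin> R"
    using back_index_in_R_iff[OF r] emod_in_range[OF n_pos] unfolding s_def back_index_def by auto
  have "(\<Sum>b\<in>?I. if fst b = s then c b else 0) = (\<Sum>b\<in>?I. if b = (s, gap n R s) then c b else 0)"
    using coeff_below_gap_zero by (intro sum.cong) (auto simp: lam_index_def le_less)
  also have "\<dots> = c (s, gap n R s)"
    using gap_index_in_lam_index[OF s] finite_lam_index by simp
  finally have "c (s, gap n R s) + c (r, gap n R r) * lam_weight p (r, gap n R r) = 0"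
    using zero_combination[of s] lam_combination_at_back_index[OF r] unfolding s_def by simp
  then show ?thesis unfolding lam_weight_def by (simp add: algebra_simps)
qed

lemma lam_family_independent: "\<forall>a\<in>lam_index n R. c a = 0"
proof -
  let ?I = "lam_index n R"
  have "?I \<noteq> {}" using card_lam_index n_pos by auto
  then have "Max ((\<lambda>a. \<bar>c a\<bar>) ` ?I) \<in> (\<lambda>a. \<bar>c a\<bar>) ` ?I"
    using finite_lam_index by (intro Max_in) auto
  then obtain r k where rk: "(r, k) \<in> ?I"
    and rk_Max: "\<bar>c (r, k)\<bar> = Max ((\<lambda>a. \<bar>c a\<bar>) ` ?I)"
    by auto
  have rk_max: "\<bar>c a\<bar> \<le> \<bar>c (r, k)\<bar>" if "a \<in> ?I" for a
    unfolding rk_Max using finite_lam_index that by (intro Max_ge) auto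
  have "c (r, k) = 0"
  proof (rule ccontr)
    assume nonzero: "c (r, k) \<noteq> 0"
    have "k \<le> gap n R r" using rk unfolding lam_index_def by simp
    then have "k = gap n R r" using coeff_below_gap_zero[OF rk] nonzero by fastforce
    then have r: "(r, gap n R r) \<in> ?I" using rk by simp
    define s where "s = back_index (r, gap n R r)"
    have "s \<in> {1..int n}" "s \<notin> R"
      using back_index_in_R_iff[OF r] emod_in_range[OF n_pos] unfolding s_def back_index_def by auto
    then have s_le: "\<bar>c (s, gap n R s)\<bar> \<le> \<bar>c (r, k)\<bar>"
      using rk_max gap_index_in_lam_index by blast
    have "2 \<le> p ^ gap n R r"
      using p_ge_2 self_le_power[of p "gap n R r"] gap_pos[of r] by simp
    then have "(2::rat) \<le> of_nat p ^ gap n R r"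
      by (metis of_nat_le_iff of_nat_numeral of_nat_power)
    then have "2 * \<bar>c (r, k)\<bar> \<le> \<bar>c (s, gap n R s)\<bar>"
      unfolding coeff_at_gap_step[OF r s_def] \<open>k = gap n R r\<close> abs_mult
      by (intro mult_right_mono) auto
    then show False using s_le nonzero by simp
  qed
  then show ?thesis using rk_max by fastforce
qed

end

end

theorem mainTheorem6:
  fixes n p :: nat and R :: "int set"
  assumes "n \<ge> 1" and "prime p" and "R \<subset> {1..int n}"
  shows "card (lam_index n R) = n \<and> inj_on (\<lambda>(r, k). lam n p R r k) (lam_index n R)
         \<and> is_basis_Qn n (lam_index n R) (\<lambda>(r, k). lam n p R r k)"
proof -
  interpret cyclic_gaps n R
    using assms(3) by unfold_locales blast
  have indep: "\<And>c. (\<And>j. (\<Sum>a\<in>lam_index n R. c a * lam_family p a j) = 0)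
      \<Longrightarrow> \<forall>a\<in>lam_index n R. c a = 0"
    using lam_family_independent prime_ge_2_nat[OF assms(2)] by blast
  have "is_basis_Qn n (lam_index n R) (lam_family p)"
    unfolding is_basis_Qn_def
  proof (intro conjI finite_lam_index ballI allI impI)
    show "lam_family p a j = 0" if "j \<notin> {1..int n}" for a j
      using lam_family_support that .
    show "\<exists>!c. (\<forall>a. a \<notin> lam_index n R \<longrightarrow> c a = 0)
        \<and> x = (\<lambda>j. \<Sum>a\<in>lam_index n R. c a * lam_family p a j)"
      if "\<forall>j. j \<notin> {1..int n} \<longrightarrow> x j = 0" for x
    proof (rule unique_combination_if_independent[OF finite_lam_index _ _ _ indep])
      show "card (lam_index n R) = card {1..int n}" using card_lam_index by simp
    qed (use lam_family_support that in auto)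
  qed
  then show ?thesis
    using card_lam_index inj_on_if_coefficients_zero[where v = "lam_family p", OF finite_lam_index indep]
    by blast
qed

end
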